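(* Let $\omega$ be an attack cycle. For $k\ge 0$, the probability that $\omega$ is won by the attacker and $L(\omega)=k$ equals $\pi_k$. For $k\ge 2$, the probability that $\omega$ is won by the attacker and $L(\omega)\le k$ equals $pq^2+pq^2C_{k-2}(pq)$.
   Context: Honest hashrate $p$, attacker hashrate $q$, $p+q=1$, $0<q<p$. Attack cycles are words in S (attacker block) and H (honest block): H, SHS, SHH, or SSwH with $w$ a Dyck word over $\{S,H\}$ (S up-step, H down-step); with $|w|$ half the length of $w$: $\mathbb{P}[H]=p$, $\mathbb{P}[SHS]=pq^2$, $\mathbb{P}[SHH]=p^2q$, $\mathbb{P}[SSwH]=q^2p(pq)^{|w|}$. $L(\omega)$ is the number of blocks added to the official chain: $L(H)=1$, $L(SHS)=L(SHH)=2$, $L(SSwH)=|w|+2$. The cycle is won by the attacker if $\omega=SHS$ or $\omega$ starts with SS. $C_n=\frac{(2n)!}{n!(n+1)!}$ is the $n$-th Catalan number and $C_n(x)=\sum_{k=0}^nC_kx^k$. Set $\pi_0=\pi_1=0$ and for $k\ge2$, $\pi_k=pq^2\bigl(\mathbf 1_{k=2}+(pq)^{k-2}C_{k-2}\bigr)$. *)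

theory Defs
  imports "HOL-Analysis.Analysis"
begin

datatype blk = S | H

definition nS :: "blk list \<Rightarrow> nat" where "nS w = length (filter (\<lambda>b. b = S) w)"
definition nH :: "blk list \<Rightarrow> nat" where "nH w = length (filter (\<lambda>b. b = H) w)"

definition dyck :: "blk list \<Rightarrow> bool" where
  "dyck w \<longleftrightarrow> (\<forall>i \<le> length w. nH (take i w) \<le> nS (take i w)) \<and> nS w = nH w"

definition half :: "blk list \<Rightarrow> nat" where "half w = length w div 2"

definition attack_cycles :: "blk list set" where
  "attack_cycles = {[H], [S,H,S], [S,H,H]} \<union> {[S,S] @ w @ [H] | w. dyck w}"

text \<open>Probability of a cycle; for SSwH, the Dyck word w is recovered as drop 2 (butlast \<omega>).\<close>
definition cyc_prob :: "real \<Rightarrow> real \<Rightarrow> blk list \<Rightarrow> real" where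
  "cyc_prob p q \<omega> =
     (if \<omega> = [H] then p
      else if \<omega> = [S,H,S] then p * q^2
      else if \<omega> = [S,H,H] then p^2 * q
      else q^2 * p * (p*q) ^ half (drop 2 (butlast \<omega>)))"

definition L :: "blk list \<Rightarrow> nat" where
  "L \<omega> = (if \<omega> = [H] then 1
          else if \<omega> = [S,H,S] \<or> \<omega> = [S,H,H] then 2
          else half (drop 2 (butlast \<omega>)) + 2)"

definition won :: "blk list \<Rightarrow> bool" where
  "won \<omega> \<longleftrightarrow> \<omega> = [S,H,S] \<or> take 2 \<omega> = [S,S]"

definition cyc_event_prob :: "real \<Rightarrow> real \<Rightarrow> (blk list \<Rightarrow> bool) \<Rightarrow> real" where
  "cyc_event_prob p q E = infsum (cyc_prob p q) {\<omega> \<in> attack_cycles. E \<omega>}"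

definition catalan :: "nat \<Rightarrow> real" where
  "catalan n = fact (2*n) / (fact n * fact (n+1))"

definition catalan_poly :: "nat \<Rightarrow> real \<Rightarrow> real" where
  "catalan_poly n x = (\<Sum>k=0..n. catalan k * x^k)"

definition pi_k :: "real \<Rightarrow> real \<Rightarrow> nat \<Rightarrow> real" where
  "pi_k p q k = (if k < 2 then 0
     else p * q^2 * ((if k = 2 then 1 else 0) + (p*q)^(k-2) * catalan (k-2)))"

end

theory Submission
  imports Defs
begin

text \<open>
  A won cycle is either SHS, of probability \<open>pq\<^sup>2\<close> and length 2, or SSwH with \<open>w\<close> a Dyck
  word, of probability \<open>pq\<^sup>2(pq)\<^sup>j\<close> and length \<open>j + 2\<close> when \<open>w\<close> has half-length \<open>j\<close>.
  So every event \<open>won \<and> P(L)\<close> with finitely many admissible lengths is a finite set of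
  cycles, and its probability is \<open>pq\<^sup>2\<close> (if \<open>P 2\<close>) plus \<open>pq\<^sup>2(pq)\<^sup>j\<close> times the number of
  Dyck words of half-length \<open>j\<close>, summed over the admissible \<open>j\<close>. That number is the
  Catalan number \<open>C\<^sub>j\<close>, obtained from the ballot numbers: words with \<open>a\<close> up-steps and
  \<open>b\<close> down-steps all of whose prefixes stay weakly above zero number
  \<open>binom(a+b,b) - binom(a+b,b-1)\<close>, as one sees by removing the last letter.
\<close>

lemma nS_simps [simp]:
  "nS [] = 0" "nS (x # w) = (if x = S then Suc (nS w) else nS w)" "nS (w @ v) = nS w + nS v"
  by (auto simp: nS_def)

lemma nH_simps [simp]:
  "nH [] = 0" "nH (x # w) = (if x = H then Suc (nH w) else nH w)" "nH (w @ v) = nH w + nH v"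
  by (auto simp: nH_def)

lemma length_eq_nS_plus_nH: "length w = nS w + nH w"
proof (induction w)
  case (Cons x w)
  then show ?case by (cases x) auto
qed simp

definition ballot_word :: "blk list \<Rightarrow> bool" where
  "ballot_word w \<longleftrightarrow> (\<forall>i \<le> length w. nH (take i w) \<le> nS (take i w))"

definition ballot_words :: "nat \<Rightarrow> nat \<Rightarrow> blk list set" where
  "ballot_words a b = {w. ballot_word w \<and> nS w = a \<and> nH w = b}"

lemma ballot_word_Nil [simp]: "ballot_word []"
  by (simp add: ballot_word_def)

lemma ballot_word_imp_nH_le_nS: "ballot_word w \<Longrightarrow> nH w \<le> nS w"
  unfolding ballot_word_def by (metis order_refl take_all)

lemma ballot_word_snoc:
  "ballot_word (w @ [x]) \<longleftrightarrow> ballot_word w \<and> nH (w @ [x]) \<le> nS (w @ [x])"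
proof -
  have "(\<forall>i \<le> length (w @ [x]). nH (take i (w @ [x])) \<le> nS (take i (w @ [x])))
      \<longleftrightarrow> (\<forall>i \<le> length w. nH (take i w) \<le> nS (take i w)) \<and> nH (w @ [x]) \<le> nS (w @ [x])"
    by (auto simp: le_Suc_eq)
  then show ?thesis
    unfolding ballot_word_def .
qed

lemma finite_ballot_words: "finite (ballot_words a b)"
proof (rule finite_subset)
  show "ballot_words a b \<subseteq> {w. set w \<subseteq> {S, H} \<and> length w = a + b}"
    unfolding ballot_words_def using length_eq_nS_plus_nH blk.exhaust by auto
  show "finite {w. set w \<subseteq> {S, H} \<and> length w = a + b}"
    by (rule finite_lists_length_eq) simp
qed

lemma ballot_words_0_0: "ballot_words 0 0 = {[]}"
  unfolding ballot_words_def by (auto simp flip: length_0_conv simp: length_eq_nS_plus_nH)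

lemma ballot_words_0_Suc: "ballot_words 0 (Suc b) = {}"
  unfolding ballot_words_def using ballot_word_imp_nH_le_nS by fastforce

lemma ballot_words_Suc_0: "ballot_words (Suc a) 0 = (\<lambda>w. w @ [S]) ` ballot_words a 0"
  (is "?W = ?R")
proof
  show "?W \<subseteq> ?R"
  proof
    fix w assume "w \<in> ?W"
    then have w: "ballot_word w" "nS w = Suc a" "nH w = 0"
      by (auto simp: ballot_words_def)
    then obtain v where "w = v @ [S]"
      by (metis nH_simps nS_simps(1) nat.distinct(1) rev_exhaust blk.exhaust add_is_0 zero_neq_one)
    with w show "w \<in> ?R"
      by (auto simp: ballot_words_def ballot_word_snoc)
  qed
  show "?R \<subseteq> ?W"
    by (auto simp: ballot_words_def ballot_word_snoc)
qed

lemma ballot_words_Suc_Suc: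
  "ballot_words (Suc a) (Suc b) =
     (\<lambda>w. w @ [S]) ` ballot_words a (Suc b) \<union>
     (if b \<le> a then (\<lambda>w. w @ [H]) ` ballot_words (Suc a) b else {})"
  (is "?W = ?R")
proof
  show "?W \<subseteq> ?R"
  proof
    fix w assume "w \<in> ?W"
    then have w: "ballot_word w" "nS w = Suc a" "nH w = Suc b"
      by (auto simp: ballot_words_def)
    then have "b \<le> a"
      using ballot_word_imp_nH_le_nS by fastforce
    obtain v x where v: "w = v @ [x]"
      using w by (metis nS_simps(1) nat.distinct(1) rev_exhaust)
    show "w \<in> ?R"
    proof (cases x)
      case S
      then show ?thesis using w v ballot_word_snoc by (auto simp: ballot_words_def)
    next
      case H
      then show ?thesis using w v ballot_word_snoc \<open>b \<le> a\<close> by (auto simp: ballot_words_def)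
    qed
  qed
  show "?R \<subseteq> ?W"
    by (auto simp: ballot_words_def ballot_word_snoc dest: ballot_word_imp_nH_le_nS split: if_splits)
qed

fun ballot :: "nat \<Rightarrow> nat \<Rightarrow> nat" where
  "ballot 0 0 = 1"
| "ballot 0 (Suc b) = 0"
| "ballot (Suc a) 0 = ballot a 0"
| "ballot (Suc a) (Suc b) = ballot a (Suc b) + (if b \<le> a then ballot (Suc a) b else 0)"

lemma card_ballot_words: "card (ballot_words a b) = ballot a b"
proof (induction a b rule: ballot.induct)
  case (4 a b)
  have "(\<lambda>w. w @ [S]) ` ballot_words a (Suc b) \<inter> (\<lambda>w. w @ [H]) ` ballot_words (Suc a) b = {}"
    by auto
  with 4 show ?case
    by (simp add: ballot_words_Suc_Suc card_Un_disjoint finite_ballot_words card_image inj_on_def)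
qed (simp_all add: ballot_words_0_0 ballot_words_0_Suc ballot_words_Suc_0 card_image inj_on_def)

lemma ballot_eq_0: "a < b \<Longrightarrow> ballot a b = 0"
  by (induction a b rule: ballot.induct) auto

lemma ballot_closed_form:
  "b \<le> Suc a \<Longrightarrow>
     real (ballot a b) = real (a + b choose b) - (if b = 0 then 0 else real (a + b choose (b - 1)))"
proof (induction a b rule: ballot.induct)
  case (4 a b)
  show ?case
  proof (cases "b \<le> a")
    case True
    have "Suc a + Suc b choose b = (Suc a + b choose b) + (if b = 0 then 0 else Suc a + b choose (b - 1))"
      by (cases b) simp_all
    with 4 True show ?thesis
      by (simp add: of_nat_add)
  next
    case False
    with "4.prems" have "b = Suc a"
      by simp
    then show ?thesis
      using ballot_eq_0[of a "Suc b"] binomial_symmetric[of b "Suc a + Suc b"] by simp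
  qed
qed simp_all

lemma catalan_eq_ballot: "catalan n = real (ballot n n)"
proof (cases n)
  case 0
  then show ?thesis by (simp add: catalan_def)
next
  case (Suc m)
  have "2 * n = Suc (m + Suc m)"
    using Suc by simp
  then have "n * (2 * n choose n) = (n + 1) * (2 * n choose m)"
    using Suc_times_binomial_add[of m "Suc m"] Suc by (metis Suc_eq_plus1)
  then have absorb: "real n * real (2 * n choose n) = real (n + 1) * real (2 * n choose m)"
    by (metis of_nat_mult)
  have "catalan n = real (2 * n choose n) / real (n + 1)"
    by (simp add: catalan_def binomial_fact algebra_simps)
  also have "\<dots> = real (2 * n choose n) - real (2 * n choose m)"
    using absorb by (simp add: field_simps)
  also have "\<dots> = real (ballot n n)"
    using ballot_closed_form[of n n] Suc by (simp add: mult_2)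
  finally show ?thesis .
qed

lemma half_eq_nS: "dyck w \<Longrightarrow> half w = nS w"
  unfolding dyck_def half_def using length_eq_nS_plus_nH[of w] by simp

lemma dyck_half_eq_ballot_words: "{w. dyck w \<and> half w = n} = ballot_words n n"
  unfolding ballot_words_def using half_eq_nS by (auto simp: dyck_def ballot_word_def)

lemma finite_dyck_half: "finite {w. dyck w \<and> half w = n}"
  by (simp add: dyck_half_eq_ballot_words finite_ballot_words)

lemma card_dyck_half: "real (card {w. dyck w \<and> half w = n}) = catalan n"
  by (simp add: dyck_half_eq_ballot_words card_ballot_words catalan_eq_ballot)

definition SSH :: "blk list \<Rightarrow> blk list" where
  "SSH w = [S, S] @ w @ [H]"

lemma inj_SSH: "inj SSH"
  by (auto simp: inj_def SSH_def)

lemma SHS_notin_range_SSH: "[S, H, S] \<notin> range SSH"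
  by (auto simp: SSH_def)

lemma cyc_prob_SSH: "cyc_prob p q (SSH w) = p * q^2 * (p * q) ^ half w"
  by (simp add: cyc_prob_def SSH_def butlast_append)

lemma won_cycles:
  "{\<omega> \<in> attack_cycles. won \<omega> \<and> P (L \<omega>)} =
     (if P 2 then {[S, H, S]} else {}) \<union> SSH ` (\<Union>j\<in>{j. P (j + 2)}. {w. dyck w \<and> half w = j})"
  by (auto simp: attack_cycles_def won_def SSH_def L_def butlast_append)

lemma cyc_event_prob_won:
  assumes "finite {j. P (j + 2)}"
  shows "cyc_event_prob p q (\<lambda>\<omega>. won \<omega> \<and> P (L \<omega>)) =
           (if P 2 then p * q^2 else 0) + (\<Sum>j | P (j + 2). p * q^2 * (p * q) ^ j * catalan j)"
proof -
  let ?D = "\<lambda>j. {w. dyck w \<and> half w = j}"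
  have fin: "finite (\<Union>j\<in>{j. P (j + 2)}. ?D j)"
    using assms finite_dyck_half by blast
  have "(\<Sum>\<omega>\<in>SSH ` (\<Union>j\<in>{j. P (j + 2)}. ?D j). cyc_prob p q \<omega>)
      = (\<Sum>w\<in>(\<Union>j\<in>{j. P (j + 2)}. ?D j). p * q^2 * (p * q) ^ half w)"
    by (simp add: sum.reindex inj_on_subset[OF inj_SSH] cyc_prob_SSH)
  also have "\<dots> = (\<Sum>j | P (j + 2). \<Sum>w\<in>?D j. p * q^2 * (p * q) ^ half w)"
    by (rule sum.UNION_disjoint[OF assms]) (auto simp: finite_dyck_half)
  also have "\<dots> = (\<Sum>j | P (j + 2). p * q^2 * (p * q) ^ j * catalan j)"
    by (intro sum.cong refl) (simp flip: card_dyck_half)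
  finally show ?thesis
    unfolding cyc_event_prob_def won_cycles using fin SHS_notin_range_SSH by (auto simp: sum.insert_if cyc_prob_def[of p q "[S, H, S]"])
qed

theorem lemma1:
  fixes p q :: real
  assumes "p + q = 1" and "0 < q" and "q < p"
  shows "(\<forall>k::nat. cyc_event_prob p q (\<lambda>\<omega>. won \<omega> \<and> L \<omega> = k) = pi_k p q k)
       \<and> (\<forall>k::nat. k \<ge> 2 \<longrightarrow>
            cyc_event_prob p q (\<lambda>\<omega>. won \<omega> \<and> L \<omega> \<le> k)
              = p * q^2 + p * q^2 * catalan_poly (k-2) (p*q))"
  \<comment> \<open>The identities hold for all \<open>p\<close>, \<open>q\<close>.\<close>
proof (intro conjI allI impI)
  fix k :: nat
  have "{j. j + 2 = k} = (if k < 2 then {} else {k - 2})"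
    by auto
  then show "cyc_event_prob p q (\<lambda>\<omega>. won \<omega> \<and> L \<omega> = k) = pi_k p q k"
    using cyc_event_prob_won[of "\<lambda>l. l = k" p q] by (simp add: pi_k_def algebra_simps)
next
  fix k :: nat
  assume "k \<ge> 2"
  then have "{j. j + 2 \<le> k} = {0..k - 2}"
    by auto
  then show "cyc_event_prob p q (\<lambda>\<omega>. won \<omega> \<and> L \<omega> \<le> k)
      = p * q^2 + p * q^2 * catalan_poly (k - 2) (p * q)"
    using cyc_event_prob_won[of "\<lambda>l. l \<le> k" p q] \<open>k \<ge> 2\<close>
    by (simp add: catalan_poly_def sum_distrib_left algebra_simps)
qed

end
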